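(* Fix $\underline\mu=\{\mu_{lk}\in\mathbb C^\tau\}$ and let $A_{lk}=\sum_{(i,j)}\alpha_{ij}\beta_{ilk}\mu_{ij}\mu_{ij}^H$. For each user $(l,k)$ and $s\in[1:\tau]$ let $c^{(s)}_{lk}=\alpha_{lk}\beta_{llk}\Re\{\mu_{lk}^H\varphi_s\}$, $b^{(s)}_{lk}=\varphi_s^HA_{lk}\varphi_s$, let $p^{(s)}_{lk}$ be a maximizer of $p\mapsto 2\sqrt p\,c^{(s)}_{lk}-p\,b^{(s)}_{lk}$ over $p\in[0,P_{\max}]$, and let $\pi^{(s)}_{lk}=2\sqrt{p^{(s)}_{lk}}\,c^{(s)}_{lk}-p^{(s)}_{lk}b^{(s)}_{lk}$. Then $$f(\underline p,\underline\psi,\underline\mu)=\sum_{(l,k)}\big(2\sqrt{p_{lk}}\,\alpha_{lk}\beta_{llk}\Re\{\mu_{lk}^H\psi_{lk}\}-p_{lk}\psi_{lk}^HA_{lk}\psi_{lk}\big)-\sigma^2\sum_{(l,k)}\alpha_{lk}\|\mu_{lk}\|^2,$$ and the maximum of $f(\cdot,\cdot,\underline\mu)$ over the feasible set $\mathcal F$ equals $\Pi^\star-\sigma^2\sum_{(l,k)}\alpha_{lk}\|\mu_{lk}\|^2$, where $\Pi^\star$ is the optimal value of the assignment problem: maximize $\sum_{(l,k,s)}\pi^{(s)}_{lk}x^{(s)}_{lk}$ over $x^{(s)}_{lk}\in\{0,1\}$ subject to $\sum_{s=1}^\tau x^{(s)}_{lk}=1$ for each $(l,k)$ and $\sum_{k=1}^K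 x^{(s)}_{lk}\le1$ for each $(l,s)$. Moreover, for any optimal $x$, setting $p_{lk}=\sum_sx^{(s)}_{lk}p^{(s)}_{lk}$ and $\psi_{lk}=\sum_sx^{(s)}_{lk}\varphi_s$ gives a maximizer of $f(\cdot,\cdot,\underline\mu)$ over $\mathcal F$.
   Context: $L$ cells indexed by $l,i$, each with $K$ users indexed by $k,j$, with $K\le\tau$; sums over $(i,j)$ or $(l,k)$ range over all $LK$ users. Noise variance $\sigma^2>0$, power budget $P_{\max}>0$, large-scale fading $\beta_{lij}>0$, weights $\alpha_{lk}>0$. $\{\varphi_1,\dots,\varphi_\tau\}\subset\mathbb C^\tau$ satisfy $\varphi_s^H\varphi_t=\tau$ if $s=t$ and $0$ otherwise. Orthogonal pilot design variables: powers $p_{lk}$ and normalized pilots $\psi_{lk}$; the feasible set $\mathcal F$ consists of all $(\underline p,\underline\psi)$ with $0\le p_{lk}\le P_{\max}$, $\psi_{lk}\in\{\varphi_1,\dots,\varphi_\tau\}$, and $\psi_{lk}\neq\psi_{lk'}$ for $k\neq k'$ (same cell). $D_l=\sigma^2I_\tau+\sum_{(i,j)}\beta_{lij}p_{ij}\psi_{ij}\psi_{ij}^H$, and $f(\underline p,\underline\psi,\underline\mu)=\sum_{(l,k)}\alpha_{lk}\big(2\beta_{llk}\sqrt{p_{lk}}\Re\{\mu_{lk}^H\psi_{lk}\}-\mu_{lk}^HD_l\mu_{lk}\big)$. *)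

theory Defs
  imports "HOL-Analysis.Analysis"
begin

text \<open>Vectors in C^tau are modelled as complex ^ 'n with tau = CARD('n).
  Cells are indexed by l < L, users by k < K, pilot indices by s < tau.\<close>

definition cinner :: "complex ^ 'n \<Rightarrow> complex ^ 'n \<Rightarrow> complex" where
  "cinner u v = (\<Sum>t\<in>UNIV. cnj (u $ t) * v $ t)"

definition outer :: "complex ^ 'n \<Rightarrow> complex ^ 'n \<Rightarrow> complex ^ 'n ^ 'n" where
  "outer u v = (\<chi> a b. u $ a * cnj (v $ b))"

definition qform :: "complex ^ 'n ^ 'n \<Rightarrow> complex ^ 'n \<Rightarrow> complex" where
  "qform M u = cinner u (M *v u)"

definition Dmat :: "nat \<Rightarrow> nat \<Rightarrow> real \<Rightarrow> (nat \<Rightarrow> nat \<Rightarrow> nat \<Rightarrow> real)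
    \<Rightarrow> (nat \<Rightarrow> nat \<Rightarrow> real) \<Rightarrow> (nat \<Rightarrow> nat \<Rightarrow> complex ^ 'n) \<Rightarrow> nat \<Rightarrow> complex ^ 'n ^ 'n" where
  "Dmat L K sigma2 \<beta> p \<psi> l =
     sigma2 *\<^sub>R mat 1 +
     (\<Sum>i<L. \<Sum>j<K. (\<beta> l i j * p i j) *\<^sub>R outer (\<psi> i j) (\<psi> i j))"

definition fobj :: "nat \<Rightarrow> nat \<Rightarrow> real \<Rightarrow> (nat \<Rightarrow> nat \<Rightarrow> real) \<Rightarrow> (nat \<Rightarrow> nat \<Rightarrow> nat \<Rightarrow> real)
    \<Rightarrow> (nat \<Rightarrow> nat \<Rightarrow> real) \<Rightarrow> (nat \<Rightarrow> nat \<Rightarrow> complex ^ 'n) \<Rightarrow> (nat \<Rightarrow> nat \<Rightarrow> complex ^ 'n) \<Rightarrow> real" where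
  "fobj L K sigma2 \<alpha> \<beta> p \<psi> \<mu> =
     (\<Sum>l<L. \<Sum>k<K. \<alpha> l k *
        (2 * \<beta> l l k * sqrt (p l k) * Re (cinner (\<mu> l k) (\<psi> l k))
         - Re (qform (Dmat L K sigma2 \<beta> p \<psi> l) (\<mu> l k))))"

definition feasible :: "nat \<Rightarrow> nat \<Rightarrow> real \<Rightarrow> (nat \<Rightarrow> complex ^ 'n)
    \<Rightarrow> (nat \<Rightarrow> nat \<Rightarrow> real) \<Rightarrow> (nat \<Rightarrow> nat \<Rightarrow> complex ^ 'n) \<Rightarrow> bool" where
  "feasible L K Pmax \<phi> p \<psi> \<longleftrightarrow>
     (\<forall>l<L. \<forall>k<K. 0 \<le> p l k \<and> p l k \<le> Pmax \<and> \<psi> l k \<in> \<phi> ` {0..<CARD('n)}) \<and>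
     (\<forall>l<L. \<forall>k<K. \<forall>k'<K. k \<noteq> k' \<longrightarrow> \<psi> l k \<noteq> \<psi> l k')"

definition Amat :: "nat \<Rightarrow> nat \<Rightarrow> (nat \<Rightarrow> nat \<Rightarrow> real) \<Rightarrow> (nat \<Rightarrow> nat \<Rightarrow> nat \<Rightarrow> real)
    \<Rightarrow> (nat \<Rightarrow> nat \<Rightarrow> complex ^ 'n) \<Rightarrow> nat \<Rightarrow> nat \<Rightarrow> complex ^ 'n ^ 'n" where
  "Amat L K \<alpha> \<beta> \<mu> l k = (\<Sum>i<L. \<Sum>j<K. (\<alpha> i j * \<beta> i l k) *\<^sub>R outer (\<mu> i j) (\<mu> i j))"

definition assign_feasible :: "nat \<Rightarrow> nat \<Rightarrow> nat \<Rightarrow> (nat \<Rightarrow> nat \<Rightarrow> nat \<Rightarrow> real) \<Rightarrow> bool" where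
  "assign_feasible L K tau x \<longleftrightarrow>
     (\<forall>l<L. \<forall>k<K. \<forall>s<tau. x l k s \<in> {0, 1}) \<and>
     (\<forall>l<L. \<forall>k<K. (\<Sum>s<tau. x l k s) = 1) \<and>
     (\<forall>l<L. \<forall>s<tau. (\<Sum>k<K. x l k s) \<le> 1)"

definition assign_obj :: "nat \<Rightarrow> nat \<Rightarrow> nat \<Rightarrow> (nat \<Rightarrow> nat \<Rightarrow> nat \<Rightarrow> real)
    \<Rightarrow> (nat \<Rightarrow> nat \<Rightarrow> nat \<Rightarrow> real) \<Rightarrow> real" where
  "assign_obj L K tau \<pi> x = (\<Sum>l<L. \<Sum>k<K. \<Sum>s<tau. \<pi> l k s * x l k s)"

definition assign_opt :: "nat \<Rightarrow> nat \<Rightarrow> nat \<Rightarrow> (nat \<Rightarrow> nat \<Rightarrow> nat \<Rightarrow> real) \<Rightarrow> real" where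
  "assign_opt L K tau \<pi> = (SUP x \<in> {x. assign_feasible L K tau x}. assign_obj L K tau \<pi> x)"

end

theory Submission
  imports Defs
begin

text \<open>Expanding the quadratic form of \<open>D\<^sub>l\<close> and exchanging the roles of \<open>(l,k)\<close> and \<open>(i,j)\<close>
  in the interference sum writes \<open>f\<close> as a constant plus a sum of per-user terms, the term of
  user \<open>(l,k)\<close> depending only on its own power and pilot. Giving every user a pilot \<open>\<phi>\<^sub>s\<close>,
  distinct within each cell, is the same as choosing a feasible 0-1 assignment, and for a fixed
  pilot \<open>s\<close> the best power is \<open>p\<^sub>l\<^sub>k\<^sup>(\<^sup>s\<^sup>)\<close> with value \<open>\<pi>\<^sub>l\<^sub>k\<^sup>(\<^sup>s\<^sup>)\<close>. Hence the best design is read off an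
  optimal assignment, which exists because there are only finitely many assignments.\<close>

lemma cinner_add_right: "cinner u (v + w) = cinner u v + cinner u w"
  unfolding cinner_def by (simp add: distrib_left sum.distrib)

lemma cinner_scaleR_right: "cinner u (c *\<^sub>R w) = of_real c * cinner u w"
proof -
  have "(c *\<^sub>R w) $ t = of_real c * w $ t" for t
    by (simp only: vector_scaleR_component) (simp add: scaleR_conv_of_real)
  then show ?thesis unfolding cinner_def by (simp add: sum_distrib_left algebra_simps)
qed

lemma cinner_commute: "cinner v u = cnj (cinner u v)"
  unfolding cinner_def by (simp add: mult.commute)

lemma cmod_cinner_commute: "cmod (cinner v u) = cmod (cinner u v)"
  by (metis cinner_commute complex_mod_cnj)

lemma qform_add: "qform (M + N) u = qform M u + qform N u"
  unfolding qform_def by (simp add: matrix_vector_mult_add_rdistrib cinner_add_right)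

lemma qform_scaleR: "qform (c *\<^sub>R M) u = of_real c * qform M u"
proof -
  have "(c *\<^sub>R M) *v u = c *\<^sub>R (M *v u)"
    by (simp add: matrix_vector_mult_def vec_eq_iff scaleR_sum_right)
  then show ?thesis unfolding qform_def by (simp add: cinner_scaleR_right)
qed

lemma qform_sum: "finite A \<Longrightarrow> qform (\<Sum>i\<in>A. M i) u = (\<Sum>i\<in>A. qform (M i) u)"
proof (induction A rule: finite_induct)
  case empty
  show ?case by (simp add: qform_def cinner_def)
qed (simp add: qform_add)

lemma Re_qform_outer: "Re (qform (outer v v) u) = (cmod (cinner v u))\<^sup>2"
proof -
  have "outer v v *v u = (\<chi> a. v $ a * cinner v u)"
    unfolding outer_def cinner_def matrix_vector_mult_def
    by (simp add: sum_distrib_left algebra_simps)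
  then have "qform (outer v v) u = (\<Sum>t\<in>UNIV. cnj (u $ t) * v $ t * cinner v u)"
    unfolding qform_def cinner_def[of u] by (simp add: algebra_simps)
  also have "\<dots> = cinner u v * cinner v u"
    unfolding sum_distrib_right[symmetric] cinner_def[of u v] ..
  finally show ?thesis
    by (simp add: cinner_commute[of u v] complex_mult_cnj) (metis cmod_power2 power2_eq_square)
qed

lemma Re_qform_mat_1: "Re (qform (mat 1) u) = (norm u)\<^sup>2"
proof -
  have "(norm u)\<^sup>2 = (\<Sum>i\<in>UNIV. (cmod (u $ i))\<^sup>2)"
    by (simp add: power2_norm_eq_inner inner_vec_def)
  then show ?thesis unfolding qform_def cinner_def
    by (simp add: complex_mult_cnj cmod_power2 mult.commute)
qed

lemma Re_qform_Dmat:
  "Re (qform (Dmat L K noise \<beta> p \<psi> l) u) =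
     noise * (norm u)\<^sup>2 + (\<Sum>i<L. \<Sum>j<K. \<beta> l i j * p i j * (cmod (cinner (\<psi> i j) u))\<^sup>2)"
  unfolding Dmat_def qform_add qform_scaleR
  by (simp add: qform_sum qform_scaleR Re_qform_mat_1 Re_qform_outer)

lemma Re_qform_Amat:
  "Re (qform (Amat L K \<alpha> \<beta> \<mu> l k) v) =
     (\<Sum>i<L. \<Sum>j<K. \<alpha> i j * \<beta> i l k * (cmod (cinner (\<mu> i j) v))\<^sup>2)"
  unfolding Amat_def by (simp add: qform_sum qform_scaleR Re_qform_outer)

definition user_utility :: "nat \<Rightarrow> nat \<Rightarrow> (nat \<Rightarrow> nat \<Rightarrow> real) \<Rightarrow> (nat \<Rightarrow> nat \<Rightarrow> nat \<Rightarrow> real)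
    \<Rightarrow> (nat \<Rightarrow> nat \<Rightarrow> complex ^ 'n) \<Rightarrow> nat \<Rightarrow> nat \<Rightarrow> real \<Rightarrow> complex ^ 'n \<Rightarrow> real" where
  "user_utility L K \<alpha> \<beta> \<mu> l k q v =
     2 * sqrt q * (\<alpha> l k * \<beta> l l k * Re (cinner (\<mu> l k) v)) - q * Re (qform (Amat L K \<alpha> \<beta> \<mu> l k) v)"

lemma sum_swap_pairs:
  "(\<Sum>a\<in>A. \<Sum>b\<in>B. \<Sum>c\<in>C. \<Sum>d\<in>D. f a b c d) = (\<Sum>c\<in>C. \<Sum>d\<in>D. \<Sum>a\<in>A. \<Sum>b\<in>B. f a b c d)"
proof -
  have "(\<Sum>a\<in>A. \<Sum>b\<in>B. \<Sum>c\<in>C. \<Sum>d\<in>D. f a b c d) = (\<Sum>a\<in>A. \<Sum>c\<in>C. \<Sum>b\<in>B. \<Sum>d\<in>D. f a b c d)"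
    by (intro sum.cong refl) (rule sum.swap)
  also have "\<dots> = (\<Sum>c\<in>C. \<Sum>a\<in>A. \<Sum>d\<in>D. \<Sum>b\<in>B. f a b c d)"
    by (subst sum.swap) (intro sum.cong refl, rule sum.swap)
  also have "\<dots> = (\<Sum>c\<in>C. \<Sum>d\<in>D. \<Sum>a\<in>A. \<Sum>b\<in>B. f a b c d)"
    by (intro sum.cong refl) (rule sum.swap)
  finally show ?thesis .
qed

lemma fobj_eq_sum_user_utility:
  "fobj L K noise \<alpha> \<beta> p \<psi> \<mu> =
     (\<Sum>l<L. \<Sum>k<K. user_utility L K \<alpha> \<beta> \<mu> l k (p l k) (\<psi> l k))
       - noise * (\<Sum>l<L. \<Sum>k<K. \<alpha> l k * (norm (\<mu> l k))\<^sup>2)"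
proof -
  let ?I = "\<lambda>l k. \<Sum>i<L. \<Sum>j<K. \<beta> l i j * p i j * (cmod (cinner (\<psi> i j) (\<mu> l k)))\<^sup>2"
  have swap_term: "\<alpha> l k * (\<beta> l i j * p i j * (cmod (cinner (\<psi> i j) (\<mu> l k)))\<^sup>2)
      = p i j * (\<alpha> l k * \<beta> l i j * (cmod (cinner (\<mu> l k) (\<psi> i j)))\<^sup>2)" for l k i j
    by (simp add: cmod_cinner_commute[of "\<mu> l k" "\<psi> i j"] mult_ac)
  text \<open>The interference received by user \<open>(l,k)\<close> through \<open>D\<^sub>l\<close>, summed over all users,
    is the interference caused by each user \<open>(i,j)\<close> measured through \<open>A\<^sub>i\<^sub>j\<close>.\<close>
  have interference: "(\<Sum>l<L. \<Sum>k<K. \<alpha> l k * ?I l k)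
      = (\<Sum>i<L. \<Sum>j<K. p i j * Re (qform (Amat L K \<alpha> \<beta> \<mu> i j) (\<psi> i j)))"
    unfolding Re_qform_Amat sum_distrib_left swap_term by (rule sum_swap_pairs)
  have "fobj L K noise \<alpha> \<beta> p \<psi> \<mu> =
      (\<Sum>l<L. \<Sum>k<K. 2 * sqrt (p l k) * (\<alpha> l k * \<beta> l l k * Re (cinner (\<mu> l k) (\<psi> l k)))
         - noise * (\<alpha> l k * (norm (\<mu> l k))\<^sup>2) - \<alpha> l k * ?I l k)"
    unfolding fobj_def Re_qform_Dmat by (intro sum.cong refl) (simp add: algebra_simps)
  also have "\<dots> = (\<Sum>l<L. \<Sum>k<K. 2 * sqrt (p l k) * (\<alpha> l k * \<beta> l l k * Re (cinner (\<mu> l k) (\<psi> l k))))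
      - noise * (\<Sum>l<L. \<Sum>k<K. \<alpha> l k * (norm (\<mu> l k))\<^sup>2) - (\<Sum>l<L. \<Sum>k<K. \<alpha> l k * ?I l k)"
    by (simp only: sum_subtractf sum_distrib_left)
  finally show ?thesis
    unfolding interference user_utility_def by (simp add: sum_subtractf)
qed

lemma inj_on_cinner_orthogonal:
  assumes "\<And>s t. s \<in> S \<Longrightarrow> t \<in> S \<Longrightarrow> s \<noteq> t \<Longrightarrow> cinner (\<phi> s) (\<phi> t) = 0"
    and "\<And>s. s \<in> S \<Longrightarrow> cinner (\<phi> s) (\<phi> s) \<noteq> 0"
  shows "inj_on \<phi> S"
proof (rule inj_onI, rule ccontr)
  fix s t assume "s \<in> S" "t \<in> S" "\<phi> s = \<phi> t" "s \<noteq> t"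
  then have "cinner (\<phi> s) (\<phi> s) = 0" using assms(1)[of s t] by simp
  with assms(2) \<open>s \<in> S\<close> show False by blast
qed

definition assignment_of :: "(nat \<Rightarrow> nat \<Rightarrow> nat) \<Rightarrow> nat \<Rightarrow> nat \<Rightarrow> nat \<Rightarrow> real" where
  "assignment_of sel l k s = (if s = sel l k then 1 else 0)"

lemma sum_assignment_of:
  fixes f :: "nat \<Rightarrow> 'a::real_vector"
  assumes "sel l k < tau"
  shows "(\<Sum>s<tau. assignment_of sel l k s *\<^sub>R f s) = f (sel l k)"
proof -
  have "(\<Sum>s<tau. assignment_of sel l k s *\<^sub>R f s) = (\<Sum>s<tau. if s = sel l k then f s else 0)"
    by (intro sum.cong) (simp_all add: assignment_of_def)
  then show ?thesis using assms by simp
qed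

lemma assign_feasibleD:
  assumes "assign_feasible L K tau x" and "l < L"
  shows "\<And>k s. k < K \<Longrightarrow> s < tau \<Longrightarrow> x l k s \<in> {0, 1}"
    and "\<And>k. k < K \<Longrightarrow> (\<Sum>s<tau. x l k s) = 1"
    and "\<And>s. s < tau \<Longrightarrow> (\<Sum>k<K. x l k s) \<le> 1"
  using assms unfolding assign_feasible_def by blast+

lemma assign_feasible_assignment_of:
  assumes "\<And>l k. l < L \<Longrightarrow> k < K \<Longrightarrow> sel l k < tau"
    and "\<And>l. l < L \<Longrightarrow> inj_on (sel l) {..<K}"
  shows "assign_feasible L K tau (assignment_of sel)"
  unfolding assign_feasible_def
proof (intro conjI allI impI)
  fix l k assume "l < L" "k < K"
  then show "(\<Sum>s<tau. assignment_of sel l k s) = 1"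
    using assms(1) unfolding assignment_of_def by simp
next
  fix l s assume "l < L" "s < tau"
  have "(\<Sum>k<K. assignment_of sel l k s) = real (card ({..<K} \<inter> {k. s = sel l k}))"
    unfolding assignment_of_def by (simp add: sum.If_cases)
  also have "card ({..<K} \<inter> {k. s = sel l k}) \<le> Suc 0"
    using inj_onD[OF assms(2)[OF \<open>l < L\<close>]] by (subst card_le_Suc0_iff_eq) auto
  finally show "(\<Sum>k<K. assignment_of sel l k s) \<le> 1" by simp
qed (simp add: assignment_of_def)

lemma zero_one_sum_eq_1_imp_unit:
  assumes "finite S" and "\<And>s. s \<in> S \<Longrightarrow> v s \<in> {0, 1::real}" and "(\<Sum>s\<in>S. v s) = 1"
  obtains s0 where "s0 \<in> S" and "\<And>s. s \<in> S \<Longrightarrow> v s = (if s = s0 then 1 else 0)"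
proof -
  have "\<exists>s0\<in>S. v s0 = 1"
  proof (rule ccontr)
    assume "\<not> (\<exists>s0\<in>S. v s0 = 1)"
    then have "\<forall>s\<in>S. v s = 0" using assms(2) by blast
    then show False using assms(3) by simp
  qed
  then obtain s0 where s0: "s0 \<in> S" "v s0 = 1" ..
  have "(\<Sum>s\<in>S - {s0}. v s) = 0"
    using assms(1,3) s0 by (simp add: sum.remove)
  then have "\<forall>s\<in>S - {s0}. v s = 0"
    using assms(1,2) by (subst (asm) sum_nonneg_eq_0_iff) force+
  then show ?thesis using that s0 by auto
qed

lemma assign_feasible_imp_assignment_of:
  assumes "assign_feasible L K tau x"
  obtains sel where "\<And>l k. l < L \<Longrightarrow> k < K \<Longrightarrow> sel l k < tau"
    and "\<And>l. l < L \<Longrightarrow> inj_on (sel l) {..<K}"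
    and "\<And>l k s. l < L \<Longrightarrow> k < K \<Longrightarrow> s < tau \<Longrightarrow> x l k s = assignment_of sel l k s"
proof -
  have unit: "\<exists>s0<tau. \<forall>s<tau. x l k s = (if s = s0 then 1 else 0)" if "l < L" "k < K" for l k
  proof -
    have "\<And>s. s \<in> {..<tau} \<Longrightarrow> x l k s \<in> {0, 1}" and "(\<Sum>s\<in>{..<tau}. x l k s) = 1"
      using assign_feasibleD[OF assms that(1)] that(2) by auto
    then obtain s0 where "s0 \<in> {..<tau}" "\<And>s. s \<in> {..<tau} \<Longrightarrow> x l k s = (if s = s0 then 1 else 0)"
      using zero_one_sum_eq_1_imp_unit[OF finite_lessThan, of tau "x l k"] by blast
    then show ?thesis by auto
  qed
  define sel where "sel l k = (SOME s0. s0 < tau \<and> (\<forall>s<tau. x l k s = (if s = s0 then 1 else 0)))"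
    for l k
  have sel: "sel l k < tau \<and> (\<forall>s<tau. x l k s = assignment_of sel l k s)" if "l < L" "k < K" for l k
    using someI_ex[OF unit[OF that]] unfolding assignment_of_def sel_def .
  have "inj_on (sel l) {..<K}" if "l < L" for l
  proof (rule inj_onI, rule ccontr)
    fix k k' assume kk': "k \<in> {..<K}" "k' \<in> {..<K}" "sel l k = sel l k'" "k \<noteq> k'"
    let ?s = "sel l k"
    have "2 = (\<Sum>j\<in>{k, k'}. x l j ?s)"
      using sel[of l k] sel[of l k'] that kk' by (simp add: assignment_of_def)
    also have "\<dots> \<le> (\<Sum>j<K. x l j ?s)"
    proof (rule sum_mono2)
      show "0 \<le> x l j ?s" if "j \<in> {..<K} - {k, k'}" for j
        using assign_feasibleD(1)[OF assms \<open>l < L\<close>, of j ?s] that sel[OF \<open>l < L\<close> kk'(1)[simplified]]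
        by auto
    qed (use kk' in auto)
    also have "\<dots> \<le> 1"
      using assign_feasibleD(3)[OF assms that] sel[OF that] kk'(1) by simp
    finally show False by simp
  qed
  then show ?thesis using that sel by blast
qed

lemma finite_assign_obj_values:
  "finite (assign_obj L K tau \<pi> ` {x. assign_feasible L K tau x})"
proof -
  define B where "B = {..<L} \<times> {..<K} \<times> {..<tau}"
  define H where "H g = (\<Sum>l<L. \<Sum>k<K. \<Sum>s<tau. \<pi> l k s * g (l, k, s))"
    for g :: "nat \<times> nat \<times> nat \<Rightarrow> real"
  have "assign_obj L K tau \<pi> ` {x. assign_feasible L K tau x} \<subseteq> H ` (B \<rightarrow>\<^sub>E {0, 1})"
  proof clarify
    fix x assume x: "assign_feasible L K tau x"
    have "restrict (\<lambda>(l, k, s). x l k s) B \<in> B \<rightarrow>\<^sub>E {0, 1}"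
      unfolding restrict_PiE_iff B_def using assign_feasibleD(1)[OF x] by auto
    moreover have "assign_obj L K tau \<pi> x = H (restrict (\<lambda>(l, k, s). x l k s) B)"
      unfolding H_def assign_obj_def B_def by simp
    ultimately show "assign_obj L K tau \<pi> x \<in> H ` (B \<rightarrow>\<^sub>E {0, 1})" by blast
  qed
  moreover have "finite (B \<rightarrow>\<^sub>E {0::real, 1})"
    unfolding B_def by (intro finite_PiE) auto
  ultimately show ?thesis by (rule finite_subset[OF _ finite_imageI])
qed

lemma assign_obj_le_assign_opt:
  "assign_feasible L K tau x \<Longrightarrow> assign_obj L K tau \<pi> x \<le> assign_opt L K tau \<pi>"
  unfolding assign_opt_def
  by (intro cSUP_upper bdd_above_finite finite_assign_obj_values) simp

lemma assign_opt_attained: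
  assumes "K \<le> tau"
  obtains x where "assign_feasible L K tau x" and "assign_obj L K tau \<pi> x = assign_opt L K tau \<pi>"
proof -
  let ?V = "assign_obj L K tau \<pi> ` {x. assign_feasible L K tau x}"
  have "assign_feasible L K tau (assignment_of (\<lambda>l k. k))"
    using assms by (intro assign_feasible_assignment_of) auto
  then have "?V \<noteq> {}" by blast
  then have "assign_opt L K tau \<pi> = Max ?V \<and> Max ?V \<in> ?V"
    unfolding assign_opt_def using finite_assign_obj_values by (simp add: cSup_eq_Max)
  then show ?thesis using that by auto
qed

lemma design_of_assignment:
  fixes \<phi> :: "nat \<Rightarrow> complex ^ 'n" and U :: "nat \<Rightarrow> nat \<Rightarrow> real \<Rightarrow> complex ^ 'n \<Rightarrow> real"
  assumes x: "assign_feasible L K CARD('n) x"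
    and \<phi>: "inj_on \<phi> {..<CARD('n)}"
    and ps: "\<And>l k s. l < L \<Longrightarrow> k < K \<Longrightarrow> s < CARD('n) \<Longrightarrow> 0 \<le> ps l k s \<and> ps l k s \<le> Pmax"
  defines "p \<equiv> \<lambda>l k. \<Sum>s<CARD('n). x l k s * ps l k s"
    and "\<psi> \<equiv> \<lambda>l k. \<Sum>s<CARD('n). x l k s *\<^sub>R \<phi> s"
  shows "feasible L K Pmax \<phi> p \<psi>"
    and "(\<Sum>l<L. \<Sum>k<K. U l k (p l k) (\<psi> l k)) =
           assign_obj L K CARD('n) (\<lambda>l k s. U l k (ps l k s) (\<phi> s)) x"
proof -
  obtain sel where sel: "\<And>l k. l < L \<Longrightarrow> k < K \<Longrightarrow> sel l k < CARD('n)"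
    and inj: "\<And>l. l < L \<Longrightarrow> inj_on (sel l) {..<K}"
    and x_eq: "\<And>l k s. l < L \<Longrightarrow> k < K \<Longrightarrow> s < CARD('n) \<Longrightarrow> x l k s = assignment_of sel l k s"
    using assign_feasible_imp_assignment_of[OF x] by blast
  have collapse: "(\<Sum>s<CARD('n). x l k s *\<^sub>R f s) = f (sel l k)"
    if "l < L" "k < K" for l k and f :: "nat \<Rightarrow> 'a::real_vector"
  proof -
    have "(\<Sum>s<CARD('n). x l k s *\<^sub>R f s) = (\<Sum>s<CARD('n). assignment_of sel l k s *\<^sub>R f s)"
      using x_eq[OF that] by (intro sum.cong) simp_all
    then show ?thesis using sum_assignment_of[of sel l k, OF sel[OF that]] by simp
  qed
  have p_eq: "p l k = ps l k (sel l k)" and \<psi>_eq: "\<psi> l k = \<phi> (sel l k)"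
    if "l < L" "k < K" for l k
    using collapse[OF that, of "ps l k"] collapse[OF that, of \<phi>] unfolding p_def \<psi>_def by simp_all
  show "feasible L K Pmax \<phi> p \<psi>"
    unfolding feasible_def
  proof (intro conjI allI impI)
    fix l k assume "l < L" "k < K"
    then show "0 \<le> p l k" "p l k \<le> Pmax" "\<psi> l k \<in> \<phi> ` {0..<CARD('n)}"
      using sel ps p_eq \<psi>_eq by auto
  next
    fix l k k' assume "l < L" "k < K" "k' < K" "k \<noteq> k'"
    then show "\<psi> l k \<noteq> \<psi> l k'"
      using sel \<psi>_eq inj_onD[OF \<phi>] inj_onD[OF inj] by (metis lessThan_iff)
  qed
  show "(\<Sum>l<L. \<Sum>k<K. U l k (p l k) (\<psi> l k)) =
           assign_obj L K CARD('n) (\<lambda>l k s. U l k (ps l k s) (\<phi> s)) x"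
    unfolding assign_obj_def
    using collapse[of _ _ "\<lambda>s. U _ _ (ps _ _ s) (\<phi> s)"] p_eq \<psi>_eq
    by (intro sum.cong refl) (simp add: mult.commute)
qed

lemma design_value_le_assign_obj:
  fixes \<phi> :: "nat \<Rightarrow> complex ^ 'n" and U :: "nat \<Rightarrow> nat \<Rightarrow> real \<Rightarrow> complex ^ 'n \<Rightarrow> real"
  assumes design: "feasible L K Pmax \<phi> p \<psi>"
    and best: "\<And>l k s q. l < L \<Longrightarrow> k < K \<Longrightarrow> s < CARD('n) \<Longrightarrow> q \<in> {0..Pmax} \<Longrightarrow>
        U l k q (\<phi> s) \<le> U l k (ps l k s) (\<phi> s)"
  obtains x where "assign_feasible L K CARD('n) x"
    and "(\<Sum>l<L. \<Sum>k<K. U l k (p l k) (\<psi> l k)) \<le>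
           assign_obj L K CARD('n) (\<lambda>l k s. U l k (ps l k s) (\<phi> s)) x"
proof -
  define sel where "sel l k = (SOME s. s < CARD('n) \<and> \<psi> l k = \<phi> s)" for l k
  have sel: "sel l k < CARD('n) \<and> \<psi> l k = \<phi> (sel l k)" if "l < L" "k < K" for l k
  proof -
    have "\<psi> l k \<in> \<phi> ` {0..<CARD('n)}"
      using design that unfolding feasible_def by blast
    then have "\<exists>s. s < CARD('n) \<and> \<psi> l k = \<phi> s" by auto
    then show ?thesis unfolding sel_def by (rule someI_ex)
  qed
  have inj: "inj_on (sel l) {..<K}" if "l < L" for l
  proof (rule inj_onI, rule ccontr)
    fix k k' assume kk': "k \<in> {..<K}" "k' \<in> {..<K}" "sel l k = sel l k'" "k \<noteq> k'"
    then have "\<psi> l k = \<psi> l k'" using sel[OF that, of k] sel[OF that, of k'] by simp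
    moreover have "\<psi> l k \<noteq> \<psi> l k'" using design that kk' unfolding feasible_def by simp
    ultimately show False by simp
  qed
  have "(\<Sum>l<L. \<Sum>k<K. U l k (p l k) (\<psi> l k)) \<le> (\<Sum>l<L. \<Sum>k<K. U l k (ps l k (sel l k)) (\<phi> (sel l k)))"
    using design best sel unfolding feasible_def by (intro sum_mono) auto
  also have "\<dots> = assign_obj L K CARD('n) (\<lambda>l k s. U l k (ps l k s) (\<phi> s)) (assignment_of sel)"
    unfolding assign_obj_def
    using sum_assignment_of[of sel _ _ "CARD('n)" "\<lambda>s. U _ _ (ps _ _ s) (\<phi> s)"] sel
    by (intro sum.cong refl) (simp add: mult.commute)
  finally show ?thesis
    using that assign_feasible_assignment_of[of L K sel "CARD('n)"] sel inj by blast
qed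

lemma fobj_le_assign_opt:
  fixes \<phi> :: "nat \<Rightarrow> complex ^ 'n"
  assumes design: "feasible L K Pmax \<phi> p \<psi>"
    and best: "\<And>l k s q. l < L \<Longrightarrow> k < K \<Longrightarrow> s < CARD('n) \<Longrightarrow> q \<in> {0..Pmax} \<Longrightarrow>
        user_utility L K \<alpha> \<beta> \<mu> l k q (\<phi> s) \<le> user_utility L K \<alpha> \<beta> \<mu> l k (ps l k s) (\<phi> s)"
  shows "fobj L K noise \<alpha> \<beta> p \<psi> \<mu> \<le>
      assign_opt L K CARD('n) (\<lambda>l k s. user_utility L K \<alpha> \<beta> \<mu> l k (ps l k s) (\<phi> s))
        - noise * (\<Sum>l<L. \<Sum>k<K. \<alpha> l k * (norm (\<mu> l k))\<^sup>2)"
proof -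
  obtain x where x: "assign_feasible L K CARD('n) x"
    and "(\<Sum>l<L. \<Sum>k<K. user_utility L K \<alpha> \<beta> \<mu> l k (p l k) (\<psi> l k)) \<le>
           assign_obj L K CARD('n) (\<lambda>l k s. user_utility L K \<alpha> \<beta> \<mu> l k (ps l k s) (\<phi> s)) x"
    using design_value_le_assign_obj[where U = "user_utility L K \<alpha> \<beta> \<mu>" and ps = ps, OF design best]
    by blast
  with assign_obj_le_assign_opt[OF x, where \<pi> = "\<lambda>l k s. user_utility L K \<alpha> \<beta> \<mu> l k (ps l k s) (\<phi> s)"]
  show ?thesis
    unfolding fobj_eq_sum_user_utility by linarith
qed

lemma fobj_design_of_assignment:
  fixes \<phi> :: "nat \<Rightarrow> complex ^ 'n"
  assumes "assign_feasible L K CARD('n) x" and "inj_on \<phi> {..<CARD('n)}"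
    and "\<And>l k s. l < L \<Longrightarrow> k < K \<Longrightarrow> s < CARD('n) \<Longrightarrow> 0 \<le> ps l k s \<and> ps l k s \<le> Pmax"
  defines "p \<equiv> \<lambda>l k. \<Sum>s<CARD('n). x l k s * ps l k s"
    and "\<psi> \<equiv> \<lambda>l k. \<Sum>s<CARD('n). x l k s *\<^sub>R \<phi> s"
  shows "feasible L K Pmax \<phi> p \<psi>"
    and "fobj L K noise \<alpha> \<beta> p \<psi> \<mu> =
      assign_obj L K CARD('n) (\<lambda>l k s. user_utility L K \<alpha> \<beta> \<mu> l k (ps l k s) (\<phi> s)) x
        - noise * (\<Sum>l<L. \<Sum>k<K. \<alpha> l k * (norm (\<mu> l k))\<^sup>2)"
  using design_of_assignment(1)[OF assms(1-3)]
    design_of_assignment(2)[where U = "user_utility L K \<alpha> \<beta> \<mu>", OF assms(1-3)]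
  unfolding p_def \<psi>_def fobj_eq_sum_user_utility by simp_all

theorem mainTheorem7:
  fixes L K :: nat and sigma2 Pmax :: real
    and \<alpha> :: "nat \<Rightarrow> nat \<Rightarrow> real" and \<beta> :: "nat \<Rightarrow> nat \<Rightarrow> nat \<Rightarrow> real"
    and \<phi> :: "nat \<Rightarrow> complex ^ 'n"
    and \<mu> :: "nat \<Rightarrow> nat \<Rightarrow> complex ^ 'n"
    and ps :: "nat \<Rightarrow> nat \<Rightarrow> nat \<Rightarrow> real"
  assumes K_le: "K \<le> CARD('n)"
    and sigma_pos: "sigma2 > 0"
    and Pmax_pos: "Pmax > 0"
    and beta_pos: "\<And>l i j. l < L \<Longrightarrow> i < L \<Longrightarrow> j < K \<Longrightarrow> \<beta> l i j > 0"
    and alpha_pos: "\<And>l k. l < L \<Longrightarrow> k < K \<Longrightarrow> \<alpha> l k > 0"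
    and phi_orth: "\<And>s t. s < CARD('n) \<Longrightarrow> t < CARD('n) \<Longrightarrow>
        cinner (\<phi> s) (\<phi> t) = (if s = t then of_nat CARD('n) else 0)"
    and ps_max: "\<And>l k s. l < L \<Longrightarrow> k < K \<Longrightarrow> s < CARD('n) \<Longrightarrow>
        0 \<le> ps l k s \<and> ps l k s \<le> Pmax \<and>
        (\<forall>q\<in>{0..Pmax}.
           2 * sqrt q * (\<alpha> l k * \<beta> l l k * Re (cinner (\<mu> l k) (\<phi> s)))
             - q * Re (qform (Amat L K \<alpha> \<beta> \<mu> l k) (\<phi> s))
           \<le> 2 * sqrt (ps l k s) * (\<alpha> l k * \<beta> l l k * Re (cinner (\<mu> l k) (\<phi> s)))
             - ps l k s * Re (qform (Amat L K \<alpha> \<beta> \<mu> l k) (\<phi> s)))"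
  defines "\<pi> \<equiv> (\<lambda>l k s.
        2 * sqrt (ps l k s) * (\<alpha> l k * \<beta> l l k * Re (cinner (\<mu> l k) (\<phi> s)))
          - ps l k s * Re (qform (Amat L K \<alpha> \<beta> \<mu> l k) (\<phi> s)))"
    and "C \<equiv> sigma2 * (\<Sum>l<L. \<Sum>k<K. \<alpha> l k * (norm (\<mu> l k))\<^sup>2)"
  shows
    "(\<forall>p \<psi>. fobj L K sigma2 \<alpha> \<beta> p \<psi> \<mu> =
        (\<Sum>l<L. \<Sum>k<K. 2 * sqrt (p l k) * \<alpha> l k * \<beta> l l k * Re (cinner (\<mu> l k) (\<psi> l k))
            - p l k * Re (qform (Amat L K \<alpha> \<beta> \<mu> l k) (\<psi> l k))) - C)
     \<and> (\<exists>p \<psi>. feasible L K Pmax \<phi> p \<psi> \<and>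
          fobj L K sigma2 \<alpha> \<beta> p \<psi> \<mu> = assign_opt L K CARD('n) \<pi> - C)
     \<and> (\<forall>p \<psi>. feasible L K Pmax \<phi> p \<psi> \<longrightarrow>
          fobj L K sigma2 \<alpha> \<beta> p \<psi> \<mu> \<le> assign_opt L K CARD('n) \<pi> - C)
     \<and> (\<forall>x. assign_feasible L K CARD('n) x \<and>
             assign_obj L K CARD('n) \<pi> x = assign_opt L K CARD('n) \<pi> \<longrightarrow>
          (let p = (\<lambda>l k. \<Sum>s<CARD('n). x l k s * ps l k s);
               \<psi> = (\<lambda>l k. \<Sum>s<CARD('n). x l k s *\<^sub>R \<phi> s)
           in feasible L K Pmax \<phi> p \<psi> \<and>
              (\<forall>p' \<psi>'. feasible L K Pmax \<phi> p' \<psi>' \<longrightarrow>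
                 fobj L K sigma2 \<alpha> \<beta> p' \<psi>' \<mu> \<le> fobj L K sigma2 \<alpha> \<beta> p \<psi> \<mu>)))"
proof -
  let ?U = "user_utility L K \<alpha> \<beta> \<mu>"
  let ?p = "\<lambda>x l k. \<Sum>s<CARD('n). x l k s * ps l k s"
  let ?\<psi> = "\<lambda>x l k. \<Sum>s<CARD('n). x l k s *\<^sub>R \<phi> s"
  have \<pi>_eq: "\<pi> = (\<lambda>l k s. ?U l k (ps l k s) (\<phi> s))"
    unfolding \<pi>_def user_utility_def ..
  have best: "\<And>l k s q. l < L \<Longrightarrow> k < K \<Longrightarrow> s < CARD('n) \<Longrightarrow> q \<in> {0..Pmax} \<Longrightarrow>
      ?U l k q (\<phi> s) \<le> ?U l k (ps l k s) (\<phi> s)"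
    using ps_max unfolding user_utility_def by blast
  have ps_range: "\<And>l k s. l < L \<Longrightarrow> k < K \<Longrightarrow> s < CARD('n) \<Longrightarrow> 0 \<le> ps l k s \<and> ps l k s \<le> Pmax"
    using ps_max by blast
  have \<phi>_inj: "inj_on \<phi> {..<CARD('n)}"
    using phi_orth by (intro inj_on_cinner_orthogonal) auto
  have upper: "fobj L K sigma2 \<alpha> \<beta> p \<psi> \<mu> \<le> assign_opt L K CARD('n) \<pi> - C"
    if "feasible L K Pmax \<phi> p \<psi>" for p \<psi>
    using fobj_le_assign_opt[where ps = ps, OF that best] unfolding \<pi>_eq C_def .
  have optimal: "feasible L K Pmax \<phi> (?p x) (?\<psi> x) \<and>
      fobj L K sigma2 \<alpha> \<beta> (?p x) (?\<psi> x) \<mu> = assign_obj L K CARD('n) \<pi> x - C"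
    if "assign_feasible L K CARD('n) x" for x
    using fobj_design_of_assignment[OF that \<phi>_inj ps_range] unfolding \<pi>_eq C_def by simp
  obtain x0 where x0: "assign_feasible L K CARD('n) x0" "assign_obj L K CARD('n) \<pi> x0 = assign_opt L K CARD('n) \<pi>"
    using assign_opt_attained[OF K_le] by blast
  have expansion: "fobj L K sigma2 \<alpha> \<beta> p \<psi> \<mu> =
      (\<Sum>l<L. \<Sum>k<K. 2 * sqrt (p l k) * \<alpha> l k * \<beta> l l k * Re (cinner (\<mu> l k) (\<psi> l k))
          - p l k * Re (qform (Amat L K \<alpha> \<beta> \<mu> l k) (\<psi> l k))) - C" for p \<psi>
    unfolding C_def fobj_eq_sum_user_utility user_utility_def by (simp add: mult.assoc)
  show ?thesis
  proof (intro conjI allI impI)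
    show "\<exists>p \<psi>. feasible L K Pmax \<phi> p \<psi> \<and> fobj L K sigma2 \<alpha> \<beta> p \<psi> \<mu> = assign_opt L K CARD('n) \<pi> - C"
      using optimal[OF x0(1)] x0(2) by (intro exI[of _ "?p x0"] exI[of _ "?\<psi> x0"]) simp
  next
    fix x assume "assign_feasible L K CARD('n) x \<and> assign_obj L K CARD('n) \<pi> x = assign_opt L K CARD('n) \<pi>"
    then show "let p = (\<lambda>l k. \<Sum>s<CARD('n). x l k s * ps l k s); \<psi> = (\<lambda>l k. \<Sum>s<CARD('n). x l k s *\<^sub>R \<phi> s)
        in feasible L K Pmax \<phi> p \<psi> \<and> (\<forall>p' \<psi>'. feasible L K Pmax \<phi> p' \<psi>' \<longrightarrow>
             fobj L K sigma2 \<alpha> \<beta> p' \<psi>' \<mu> \<le> fobj L K sigma2 \<alpha> \<beta> p \<psi> \<mu>)"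
      using optimal[of x] upper unfolding Let_def by simp
  qed (use expansion upper in simp_all)
qed

end
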